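(* Let $a<b$ and let $f:[a,b]\to\mathbb{R}$ be continuous. Then there exists $\eta\in(a,b)$ such that $$f(\eta)=\frac{1}{\eta-a}\int_a^\eta f(t)\,\mathrm{d}t+\frac{\eta-a}{2}\cdot\frac{f(b)-f(a)}{b-a}.$$ *)

theory Defs
  imports "HOL-Analysis.Analysis"
begin

end

theory Submission
  imports Defs
begin

text \<open>
  The statement is Flett's mean value theorem for
  \<open>G x = \<integral>\<^sub>a\<^sup>x f - k (x - a)\<^sup>2 / 2\<close> with \<open>k = (f b - f a) / (b - a)\<close>, whose derivative
  \<open>f x - k (x - a)\<close> takes the value \<open>f a\<close> at both ends.
  Flett's theorem asks for a critical point of the slope \<open>\<psi> x = (g x - g a) / (x - a)\<close>,
  extended by \<open>\<psi> a = g' a\<close>. Since \<open>\<psi>' x = (g' x - \<psi> x) / (x - a)\<close> and \<open>g' b = \<psi> a\<close>,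
  the sign of \<open>\<psi>' b\<close> is opposite to that of \<open>\<psi> b - \<psi> a\<close>; so either \<open>\<psi> a = \<psi> b\<close> and
  Rolle applies, or an extremum of \<open>\<psi>\<close> on \<open>[a, b]\<close> is attained in the interior.
\<close>

lemma interior_critical_point_if_left_derivative_neg:
  fixes \<psi> \<psi>' :: "real \<Rightarrow> real"
  assumes "a < b" and cont: "continuous_on {a..b} \<psi>" and "\<psi> a < \<psi> b"
    and der_b: "(\<psi> has_real_derivative D) (at b within {a..b})" and "D < 0"
    and der: "\<And>x. x \<in> {a<..<b} \<Longrightarrow> (\<psi> has_real_derivative \<psi>' x) (at x)"
  shows "\<exists>m\<in>{a<..<b}. \<psi>' m = 0"
proof -
  obtain m where m: "m \<in> {a..b}" and max: "\<And>y. y \<in> {a..b} \<Longrightarrow> \<psi> y \<le> \<psi> m"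
    using continuous_attains_sup[OF compact_Icc _ cont] \<open>a < b\<close> by auto
  have "m \<noteq> a"
    using max[of b] \<open>a < b\<close> \<open>\<psi> a < \<psi> b\<close> by force
  moreover have "m \<noteq> b"
  proof
    assume "m = b"
    obtain d where "d > 0" and dec: "\<And>h. h > 0 \<Longrightarrow> b - h \<in> {a..b} \<Longrightarrow> h < d \<Longrightarrow> \<psi> b < \<psi> (b - h)"
      using has_real_derivative_neg_dec_left[OF der_b \<open>D < 0\<close>] by blast
    obtain h where h: "0 < h" "h < d" "b - h \<in> {a..b}"
      using \<open>d > 0\<close> \<open>a < b\<close> by (intro that[of "min d (b - a) / 2"]) (auto simp: min_def field_simps)
    have "\<psi> b < \<psi> (b - h)"
      using h by (intro dec)
    moreover have "\<psi> (b - h) \<le> \<psi> b"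
      using max[of "b - h"] \<open>m = b\<close> h by auto
    ultimately show False by simp
  qed
  ultimately have m_inner: "m \<in> {a<..<b}"
    using m by auto
  then obtain d where "d > 0" and "\<forall>y. \<bar>m - y\<bar> < d \<longrightarrow> a \<le> y \<and> y \<le> b"
    using lemma_interval by (metis greaterThanLessThan_iff)
  then have "\<psi>' m = 0"
    using max by (intro DERIV_local_max[OF der[OF m_inner]]) auto
  with m_inner show ?thesis by blast
qed

theorem flett_mean_value:
  fixes g g' :: "real \<Rightarrow> real"
  assumes "a < b"
    and der: "\<And>x. x \<in> {a..b} \<Longrightarrow> (g has_real_derivative g' x) (at x within {a..b})"
    and "g' a = g' b"
  shows "\<exists>\<eta>\<in>{a<..<b}. g \<eta> - g a = g' \<eta> * (\<eta> - a)"
proof -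
  define \<psi> where "\<psi> x = (if x = a then g' a else (g x - g a) / (x - a))" for x
  define \<psi>' where "\<psi>' x = (g' x - \<psi> x) / (x - a)" for x
  have der_\<psi>: "(\<psi> has_real_derivative \<psi>' x) (at x within {a..b})" if x: "x \<in> {a<..b}" for x
  proof -
    have "((\<lambda>y. (g y - g a) / (y - a)) has_real_derivative \<psi>' x) (at x within {a..b})"
      using x der[of x] by (auto intro!: derivative_eq_intros simp: \<psi>'_def \<psi>_def field_simps)
    then show ?thesis
      by (rule has_field_derivative_transform_within[where d = "x - a"])
        (use x in \<open>auto simp: \<psi>_def dist_real_def\<close>)
  qed
  have "continuous (at x within {a..b}) \<psi>" if "x \<in> {a..b}" for x
  proof (cases "x = a")
    case True
    have "((\<lambda>y. (g y - g a) / (y - a)) \<longlongrightarrow> g' a) (at a within {a..b})"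
      using der[of a] \<open>a < b\<close> by (simp add: has_field_derivative_iff)
    then have "(\<psi> \<longlongrightarrow> g' a) (at a within {a..b})"
      by (rule Lim_transform_within[where d = 1]) (auto simp: \<psi>_def)
    with True show ?thesis
      by (simp add: continuous_within \<psi>_def)
  next
    case False
    with that show ?thesis
      using DERIV_continuous[OF der_\<psi>] by auto
  qed
  then have cont: "continuous_on {a..b} \<psi>"
    by (simp add: continuous_on_eq_continuous_within)
  have der_inner: "(\<psi> has_real_derivative \<psi>' x) (at x)" if "x \<in> {a<..<b}" for x
    using der_\<psi>[of x] that at_within_interior[of x "{a..b}"] by auto
  have der_b: "(\<psi> has_real_derivative (\<psi> a - \<psi> b) / (b - a)) (at b within {a..b})"
    using der_\<psi>[of b] \<open>a < b\<close> \<open>g' a = g' b\<close> by (simp add: \<psi>'_def \<psi>_def)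
  obtain \<eta> where \<eta>: "\<eta> \<in> {a<..<b}" and "\<psi>' \<eta> = 0"
  proof (cases rule: linorder_cases[of "\<psi> a" "\<psi> b"])
    case less
    then show ?thesis
      using interior_critical_point_if_left_derivative_neg[OF \<open>a < b\<close> cont less der_b _ der_inner]
        \<open>a < b\<close> that by (auto simp: divide_neg_pos)
  next
    case greater
    have "((\<lambda>x. - \<psi> x) has_real_derivative (\<psi> b - \<psi> a) / (b - a)) (at b within {a..b})"
      using DERIV_minus[OF der_b] by (simp add: minus_divide_left)
    moreover have "((\<lambda>x. - \<psi> x) has_real_derivative - \<psi>' x) (at x)" if "x \<in> {a<..<b}" for x
      using DERIV_minus[OF der_inner[OF that]] .
    ultimately have "\<exists>m\<in>{a<..<b}. - \<psi>' m = 0"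
      using greater \<open>a < b\<close> continuous_on_minus[OF cont]
      by (intro interior_critical_point_if_left_derivative_neg) (auto simp: divide_neg_pos)
    then show ?thesis using that by auto
  next
    case equal
    then obtain z where "a < z" "z < b" "(*) (\<psi>' z) = (\<lambda>v. 0)"
      using Rolle_deriv[OF \<open>a < b\<close> equal cont, of "\<lambda>x. (*) (\<psi>' x)"] der_inner
      by (auto simp: has_field_derivative_def)
    then show ?thesis
      using that[of z] by (auto dest: fun_cong[where x = 1])
  qed
  with \<eta> have "g' \<eta> = (g \<eta> - g a) / (\<eta> - a)"
    by (auto simp: \<psi>'_def \<psi>_def)
  with \<eta> have "g \<eta> - g a = g' \<eta> * (\<eta> - a)"
    by (simp add: field_simps)
  with \<eta> show ?thesis ..
qed

theorem mainTheorem5: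
  fixes f :: "real \<Rightarrow> real" and a b :: real
  assumes "a < b" and "continuous_on {a..b} f"
  shows "\<exists>\<eta>\<in>{a<..<b}. f \<eta> = integral {a..\<eta>} f / (\<eta> - a)
            + (\<eta> - a) / 2 * ((f b - f a) / (b - a))"
proof -
  define k where "k = (f b - f a) / (b - a)"
  define G where "G x = integral {a..x} f - k * (x - a)\<^sup>2 / 2" for x
  have "(G has_real_derivative f x - k * (x - a)) (at x within {a..b})" if "x \<in> {a..b}" for x
  proof -
    have "((\<lambda>x. k * (x - a)\<^sup>2 / 2) has_real_derivative k * (x - a)) (at x within {a..b})"
      by (auto intro!: derivative_eq_intros)
    then show ?thesis
      unfolding G_def[abs_def]
      by (intro DERIV_diff integral_has_real_derivative[OF assms(2) that])
  qed
  moreover have "f a - k * (a - a) = f b - k * (b - a)"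
    using \<open>a < b\<close> by (simp add: k_def)
  ultimately obtain \<eta> where \<eta>: "\<eta> \<in> {a<..<b}" and "G \<eta> - G a = (f \<eta> - k * (\<eta> - a)) * (\<eta> - a)"
    using flett_mean_value[OF \<open>a < b\<close>, of G "\<lambda>x. f x - k * (x - a)"] by blast
  then have "f \<eta> = integral {a..\<eta>} f / (\<eta> - a) + (\<eta> - a) / 2 * k"
    by (auto simp: G_def field_simps power2_eq_square)
  with \<eta> show ?thesis
    by (auto simp: k_def)
qed

end
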